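(* Let $f$ be a function of unitation on $\{0,1\}^n$, and let $\sigma=1$, $\kappa\in\mathbb{N}$ and $\mu\geq (n+1)\cdot\kappa$. Then the expected time (number of generations) for the $(\mu+1)$ EA with phenotypic clearing with clearing radius $\sigma$, niche capacity $\kappa$ and population size $\mu$ on $f$ to find the search points $0^n$ and $1^n$ is $O(\mu n\log n)$.
   Context: A function of unitation is $f:\{0,1\}^n\to\mathbb{R}$ with $f(x)=u(|x|_1)$ for some $u:\{0,\dots,n\}\to\mathbb{R}^+$, where $|x|_1$ is the number of 1-bits of $x$; fitness values are assumed positive. The $(\mu+1)$ EA with clearing (population size $\mu$, clearing radius $\sigma$, niche capacity $\kappa$, distance function $\mathrm{d}$): $P_0$ consists of $\mu$ bit strings chosen independently and uniformly at random. In generation $t$: choose a parent $x\in P_t$ uniformly at random; create $y$ by flipping each bit of $x$ independently with probability $1/n$; let $P_t^*=P_t\cup\{y\}$; update the fitness values of $P_t^*$ by the clearing procedure: sort $P_t^*$ by decreasing fitness; for $i=1,\dots,|P_t^*|$, if the current fitness of $P[i]$ is positive, set $w:=1$ and for $j=i+1,\dots,|P_t^*|$: if the current fitness of $P[j]$ is positive and $\mathrm{d}(P[i],P[j])<\sigma$ then, if $w<\kappa$ set $w:=w+1$, else set the fitness of $P[j]$ to $0$. Individuals whose fitness is not reset are winners, the others are cleared. Then choose $z\in P_t$ with worst (cleared) fitness uniformly at random; if the (cleared) fitness of $y$ is at least that of $z$, set $P_{t+1}=P_t^*\setminus\{z\}$, otherwise $P_{t+1}=P_t^*\setminus\{y\}$.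 Phenotypic clearing uses $\mathrm{d}(x,y)=\big||x|_1-|y|_1\big|$. *)

theory Defs
  imports "HOL-Probability.Probability"
begin

type_synonym bitstring = "bool list"
type_synonym population = "bitstring list"

definition ones :: "bitstring \<Rightarrow> nat" where
  "ones x = length (filter id x)"

definition pheno_dist :: "bitstring \<Rightarrow> bitstring \<Rightarrow> real" where
  "pheno_dist x y = \<bar>real (ones x) - real (ones y)\<bar>"

definition uniform_string :: "nat \<Rightarrow> bitstring pmf" where
  "uniform_string n = pmf_of_set {xs. length xs = n}"

fun init_pop :: "nat \<Rightarrow> nat \<Rightarrow> population pmf" where
  "init_pop n 0 = return_pmf []"
| "init_pop n (Suc m) = do { x \<leftarrow> uniform_string n; xs \<leftarrow> init_pop n m; return_pmf (x # xs) }"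

fun mutate :: "real \<Rightarrow> bitstring \<Rightarrow> bitstring pmf" where
  "mutate p [] = return_pmf []"
| "mutate p (b # bs) = do { c \<leftarrow> bernoulli_pmf p; r \<leftarrow> mutate p bs; return_pmf ((b \<noteq> c) # r) }"

text \<open>Inner loop of the clearing procedure for winner index i (index into Q), going over the
  indices js (in sorted order) that come after i. State: current fitness values and counter w.\<close>
definition clear_inner ::
  "(bitstring \<Rightarrow> bitstring \<Rightarrow> real) \<Rightarrow> real \<Rightarrow> nat \<Rightarrow> bitstring list \<Rightarrow> nat \<Rightarrow> nat list
     \<Rightarrow> (nat \<Rightarrow> real) \<Rightarrow> (nat \<Rightarrow> real)" where
  "clear_inner d \<sigma> \<kappa> Q i js fit =
     fst (foldl (\<lambda>(g, w) j. if 0 < g j \<and> d (Q ! i) (Q ! j) < \<sigma>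
                            then (if w < \<kappa> then (g, w + 1) else (g(j := 0), w))
                            else (g, w)) (fit, 1::nat) js)"

fun clear_outer ::
  "(bitstring \<Rightarrow> bitstring \<Rightarrow> real) \<Rightarrow> real \<Rightarrow> nat \<Rightarrow> bitstring list \<Rightarrow> nat list
     \<Rightarrow> (nat \<Rightarrow> real) \<Rightarrow> (nat \<Rightarrow> real)" where
  "clear_outer d \<sigma> \<kappa> Q [] fit = fit"
| "clear_outer d \<sigma> \<kappa> Q (i # is) fit =
     clear_outer d \<sigma> \<kappa> Q is (if 0 < fit i then clear_inner d \<sigma> \<kappa> Q i is fit else fit)"

text \<open>Cleared fitness of the members of Q (indexed by position in Q). Q is sorted by
  decreasing fitness with a stable sort (ties keep their order in Q).\<close>
definition cleared_fitness ::
  "(bitstring \<Rightarrow> real) \<Rightarrow> (bitstring \<Rightarrow> bitstring \<Rightarrow> real) \<Rightarrow> real \<Rightarrow> nat \<Rightarrow> bitstring list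
     \<Rightarrow> nat \<Rightarrow> real" where
  "cleared_fitness f d \<sigma> \<kappa> Q =
     clear_outer d \<sigma> \<kappa> Q (sort_key (\<lambda>i. - f (Q ! i)) [0..<length Q]) (\<lambda>i. f (Q ! i))"

definition remove_at :: "nat \<Rightarrow> 'a list \<Rightarrow> 'a list" where
  "remove_at k xs = take k xs @ drop (Suc k) xs"

definition ea_step ::
  "nat \<Rightarrow> (bitstring \<Rightarrow> real) \<Rightarrow> (bitstring \<Rightarrow> bitstring \<Rightarrow> real) \<Rightarrow> real \<Rightarrow> nat
     \<Rightarrow> population \<Rightarrow> population pmf" where
  "ea_step n f d \<sigma> \<kappa> P = do {
     i \<leftarrow> pmf_of_set {..<length P};
     y \<leftarrow> mutate (1 / real n) (P ! i);
     let Q = P @ [y];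
     let cf = cleared_fitness f d \<sigma> \<kappa> Q;
     let worst = Min (cf ` {..<length P});
     z \<leftarrow> pmf_of_set {k. k < length P \<and> cf k = worst};
     return_pmf (if cf z \<le> cf (length P) then remove_at z Q else P)
   }"

text \<open>Distribution of the state at generation t: the population P_t together with flags
  recording whether 0^n resp. 1^n has been contained in some population P_s, s \<le> t.\<close>
fun ea_state ::
  "nat \<Rightarrow> nat \<Rightarrow> (bitstring \<Rightarrow> real) \<Rightarrow> (bitstring \<Rightarrow> bitstring \<Rightarrow> real) \<Rightarrow> real \<Rightarrow> nat
     \<Rightarrow> nat \<Rightarrow> (population \<times> bool \<times> bool) pmf" where
  "ea_state n \<mu> f d \<sigma> \<kappa> 0 =
     map_pmf (\<lambda>P. (P, replicate n False \<in> set P, replicate n True \<in> set P)) (init_pop n \<mu>)"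
| "ea_state n \<mu> f d \<sigma> \<kappa> (Suc t) =
     ea_state n \<mu> f d \<sigma> \<kappa> t \<bind> (\<lambda>(P, a, b).
       map_pmf (\<lambda>P'. (P', a \<or> replicate n False \<in> set P', b \<or> replicate n True \<in> set P'))
               (ea_step n f d \<sigma> \<kappa> P))"

text \<open>Expected number of generations T until both 0^n and 1^n have been found,
  E[T] = sum_{t \<ge> 0} Pr[T > t] (as an extended non-negative real, possibly infinite).\<close>
definition expected_time ::
  "nat \<Rightarrow> nat \<Rightarrow> (bitstring \<Rightarrow> real) \<Rightarrow> (bitstring \<Rightarrow> bitstring \<Rightarrow> real) \<Rightarrow> real \<Rightarrow> nat \<Rightarrow> ennreal" where
  "expected_time n \<mu> f d \<sigma> \<kappa> =
     (\<Sum>t. ennreal (measure_pmf.prob (ea_state n \<mu> f d \<sigma> \<kappa> t) {s. \<not> (fst (snd s) \<and> snd (snd s))}))"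

end

theory Submission
  imports Defs
begin

(* Clearing with radius 1 groups the individuals by their number of one-bits, and on each of the
   n + 1 levels at most kappa of them keep their fitness. As mu >= (n + 1) * kappa, one of the
   mu + 1 candidates of a generation is cleared, so a worst individual has cleared fitness 0:
   either the offspring is rejected, or a cleared individual is removed whose level survives
   through its winner, and an offspring on a new level always survives. Hence the set of occupied
   levels never shrinks. The lowest occupied level m drops with probability at least m/(9 mu n)
   (choose a parent on it and flip exactly one of its one-bits), and symmetrically for the highest
   level M. The potential 9 mu n (H_m + H_(n - M)), with H the harmonic numbers, therefore
   decreases by at least one per generation in expectation until 0^n and 1^n have both appeared,
   which gives the bound 18 mu n H_n = O(mu n log n). *)

section \<open>Clearing\<close>

definition clear_step ::
  "(bitstring \<Rightarrow> bitstring \<Rightarrow> real) \<Rightarrow> real \<Rightarrow> nat \<Rightarrow> bitstring list \<Rightarrow> nat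
     \<Rightarrow> (nat \<Rightarrow> real) \<times> nat \<Rightarrow> nat \<Rightarrow> (nat \<Rightarrow> real) \<times> nat" where
  "clear_step d \<sigma> \<kappa> Q i = (\<lambda>(g, w) j. if 0 < g j \<and> d (Q ! i) (Q ! j) < \<sigma>
                            then (if w < \<kappa> then (g, w + 1) else (g(j := 0), w))
                            else (g, w))"

lemma clear_inner_eq_foldl:
  "clear_inner d \<sigma> \<kappa> Q i js fit = fst (foldl (clear_step d \<sigma> \<kappa> Q i) (fit, 1) js)"
  by (simp add: clear_inner_def clear_step_def)

lemma foldl_clear_step_notin:
  "k \<notin> set js \<Longrightarrow> fst (foldl (clear_step d \<sigma> \<kappa> Q i) s js) k = fst s k"
  by (induction js arbitrary: s) (auto simp: clear_step_def split: prod.splits)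

lemma foldl_clear_step_cases:
  "fst (foldl (clear_step d \<sigma> \<kappa> Q i) s js) k = fst s k \<or>
   (fst (foldl (clear_step d \<sigma> \<kappa> Q i) s js) k = 0 \<and> k \<in> set js \<and> d (Q ! i) (Q ! k) < \<sigma>)"
proof (induction js arbitrary: s)
  case (Cons j js)
  have "fst (clear_step d \<sigma> \<kappa> Q i s j) k = fst s k \<or>
        (fst (clear_step d \<sigma> \<kappa> Q i s j) k = 0 \<and> k = j \<and> d (Q ! i) (Q ! k) < \<sigma>)"
    by (auto simp: clear_step_def split: prod.splits)
  then show ?case using Cons.IH[of "clear_step d \<sigma> \<kappa> Q i s j"] by auto
qed simp

lemma clear_outer_notin: "k \<notin> set xs \<Longrightarrow> clear_outer d \<sigma> \<kappa> Q xs g k = g k"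
  by (induction xs arbitrary: g) (auto simp: clear_inner_eq_foldl foldl_clear_step_notin)

lemma clear_outer_cases:
  "distinct xs \<Longrightarrow> clear_outer d \<sigma> \<kappa> Q xs g k = g k \<or>
   (clear_outer d \<sigma> \<kappa> Q xs g k = 0 \<and> (\<exists>i\<in>set xs. i \<noteq> k \<and> d (Q ! i) (Q ! k) < \<sigma>))"
proof (induction xs arbitrary: g)
  case (Cons i xs)
  define g' where "g' = (if 0 < g i then clear_inner d \<sigma> \<kappa> Q i xs g else g)"
  have "g' k = g k \<or> (g' k = 0 \<and> k \<in> set xs \<and> d (Q ! i) (Q ! k) < \<sigma>)"
    unfolding g'_def clear_inner_eq_foldl using foldl_clear_step_cases[of d \<sigma> \<kappa> Q i "(g, 1)" xs k]
    by auto
  then show ?case using Cons.IH[of g'] Cons.prems by (auto simp: g'_def)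
qed simp

text \<open>While the winner \<open>i\<close> sweeps over \<open>js\<close>, the counter \<open>w\<close> exceeds by one the number of
  surviving individuals close to \<open>i\<close> among those already visited (\<open>D\<close>).\<close>

lemma foldl_clear_step_count:
  assumes "distinct js" "finite D" "D \<inter> set js = {}"
    and "card {j\<in>D. d (Q!i) (Q!j) < \<sigma> \<and> 0 < g j} + 1 \<le> w" "w \<le> \<kappa>"
    and "foldl (clear_step d \<sigma> \<kappa> Q i) (g, w) js = (g', w')"
  shows "card {j \<in> D \<union> set js. d (Q!i) (Q!j) < \<sigma> \<and> 0 < g' j} + 1 \<le> w' \<and> w' \<le> \<kappa>"
  using assms
proof (induction js arbitrary: D g w)
  case (Cons j js)
  obtain g1 w1 where step: "clear_step d \<sigma> \<kappa> Q i (g, w) j = (g1, w1)" by fastforce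
  let ?close = "\<lambda>h A. {j'\<in>A. d (Q!i) (Q!j') < \<sigma> \<and> 0 < h j'}"
  have "j \<notin> D" using Cons.prems by auto
  then have "card (?close g1 (insert j D)) + 1 \<le> w1 \<and> w1 \<le> \<kappa>"
  proof (cases "0 < g j \<and> d (Q ! i) (Q ! j) < \<sigma> \<and> w < \<kappa>")
    case True
    then have "g1 = g" "w1 = w + 1" using step by (auto simp: clear_step_def)
    moreover have "?close g (insert j D) = insert j (?close g D)" using True by auto
    ultimately show ?thesis using Cons.prems True \<open>j \<notin> D\<close> by (simp add: card_insert_if)
  next
    case False
    then have "w1 = w" "?close g1 (insert j D) = ?close g D"
      using step \<open>j \<notin> D\<close> by (auto simp: clear_step_def split: if_splits)
    then show ?thesis using Cons.prems by simp
  qed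
  moreover have "foldl (clear_step d \<sigma> \<kappa> Q i) (g1, w1) js = (g', w')"
    using Cons.prems(6) step by simp
  ultimately show ?case using Cons.IH[of "insert j D" g1 w1] Cons.prems by auto
qed simp

lemma clear_outer_niche_card:
  assumes "distinct xs" "1 \<le> \<kappa>" "\<And>a b. d (Q!a) (Q!b) < \<sigma> \<longleftrightarrow> lvl a = lvl b"
  shows "card {k \<in> set xs. lvl k = l \<and> 0 < clear_outer d \<sigma> \<kappa> Q xs g k} \<le> \<kappa>"
  using assms(1)
proof (induction xs arbitrary: g)
  case (Cons i xs)
  define g' where "g' = (if 0 < g i then clear_inner d \<sigma> \<kappa> Q i xs g else g)"
  define r where "r = clear_outer d \<sigma> \<kappa> Q xs g'"
  have r: "clear_outer d \<sigma> \<kappa> Q (i # xs) g = r" by (simp add: g'_def r_def)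
  have i: "i \<notin> set xs" "distinct xs" using Cons.prems by auto
  have ri: "r i = g i"
    unfolding r_def using i by (simp add: clear_outer_notin g'_def clear_inner_eq_foldl foldl_clear_step_notin)
  have IH: "card {k \<in> set xs. lvl k = l \<and> 0 < r k} \<le> \<kappa>" using Cons.IH[OF i(2)] r_def by simp
  show ?case
  proof (cases "0 < g i \<and> l = lvl i")
    case False
    then have "{k \<in> set (i # xs). lvl k = l \<and> 0 < r k} = {k \<in> set xs. lvl k = l \<and> 0 < r k}"
      using ri by auto
    then show ?thesis using IH r by simp
  next
    case True
    obtain g1 w1 where fold: "foldl (clear_step d \<sigma> \<kappa> Q i) (g, 1) xs = (g1, w1)" by fastforce
    have g': "g' = g1" using True fold by (simp add: g'_def clear_inner_eq_foldl)
    let ?close = "{j \<in> set xs. d (Q!i) (Q!j) < \<sigma> \<and> 0 < g1 j}"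
    have count: "card ?close + 1 \<le> w1 \<and> w1 \<le> \<kappa>"
      using foldl_clear_step_count[OF i(2) _ _ _ _ fold, of "{}"] assms by auto
    have "{k \<in> set (i # xs). lvl k = l \<and> 0 < r k} \<subseteq> insert i ?close"
    proof
      fix k assume k: "k \<in> {k \<in> set (i # xs). lvl k = l \<and> 0 < r k}"
      have "r k = g' k \<or> r k = 0" using clear_outer_cases[OF i(2), of d \<sigma> \<kappa> Q g' k] r_def by auto
      then show "k \<in> insert i ?close" using k True assms(3) g' by auto
    qed
    then have "card {k \<in> set (i # xs). lvl k = l \<and> 0 < r k} \<le> card (insert i ?close)"
      by (intro card_mono) simp_all
    also have "\<dots> \<le> Suc (card ?close)" by (simp add: card_insert_if)
    finally show ?thesis using count r by simp
  qed
qed (use assms in simp)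

definition levels :: "population \<Rightarrow> nat set" where
  "levels P = ones ` set P"

lemma pheno_dist_less_1_iff: "pheno_dist x y < 1 \<longleftrightarrow> ones x = ones y"
  unfolding pheno_dist_def by linarith

lemma cleared_fitness_cases:
  assumes "k < length Q"
  shows "cleared_fitness f pheno_dist 1 \<kappa> Q k = f (Q!k) \<or>
    (cleared_fitness f pheno_dist 1 \<kappa> Q k = 0 \<and> (\<exists>i<length Q. i \<noteq> k \<and> ones (Q!i) = ones (Q!k)))"
  using clear_outer_cases[of "sort_key (\<lambda>i. - f (Q ! i)) [0..<length Q]" pheno_dist 1 \<kappa> Q "\<lambda>i. f (Q ! i)" k]
  unfolding cleared_fitness_def pheno_dist_less_1_iff by auto

lemma card_winners_le:
  assumes "1 \<le> \<kappa>" "\<forall>x\<in>set Q. ones x \<le> n"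
  shows "card {k. k < length Q \<and> 0 < cleared_fitness f pheno_dist 1 \<kappa> Q k} \<le> (n + 1) * \<kappa>"
proof -
  let ?cf = "cleared_fitness f pheno_dist 1 \<kappa> Q"
  let ?xs = "sort_key (\<lambda>i. - f (Q ! i)) [0..<length Q]"
  have niche: "card {k. k < length Q \<and> ones (Q!k) = l \<and> 0 < ?cf k} \<le> \<kappa>" for l
    using clear_outer_niche_card[where xs = ?xs and d = pheno_dist and \<sigma> = 1 and lvl = "\<lambda>k. ones (Q!k)"] assms(1)
    unfolding cleared_fitness_def pheno_dist_less_1_iff by (simp add: lessThan_def)
  have "{k. k < length Q \<and> 0 < ?cf k} = (\<Union>l\<le>n. {k. k < length Q \<and> ones (Q!k) = l \<and> 0 < ?cf k})"
    using assms(2) by (auto simp: nth_mem)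
  then have "card {k. k < length Q \<and> 0 < ?cf k} \<le> (\<Sum>l\<le>n. card {k. k < length Q \<and> ones (Q!k) = l \<and> 0 < ?cf k})"
    by (simp add: card_UN_le)
  also have "\<dots> \<le> (\<Sum>l\<le>n. \<kappa>)" by (intro sum_mono niche)
  finally show ?thesis by simp
qed

section \<open>Replacement of a worst individual\<close>

lemma remove_at_nth_mem:
  assumes "k < length xs" "k \<noteq> z"
  shows "xs ! k \<in> set (remove_at z xs)"
proof (cases "k < z")
  case True
  then show ?thesis using assms by (auto simp: remove_at_def in_set_conv_nth intro!: exI[of _ k])
next
  case False
  then show ?thesis using assms by (auto simp: remove_at_def in_set_conv_nth intro!: exI[of _ "k - Suc z"])
qed

lemma set_remove_at_subset: "set (remove_at z xs) \<subseteq> set xs"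
  unfolding remove_at_def using set_take_subset set_drop_subset by fastforce

lemma length_remove_at: "z < length xs \<Longrightarrow> length (remove_at z xs) = length xs - 1"
  unfolding remove_at_def by simp

definition replace_worst :: "(bitstring \<Rightarrow> real) \<Rightarrow> nat \<Rightarrow> population \<Rightarrow> bitstring \<Rightarrow> population pmf" where
  "replace_worst f \<kappa> P y =
     (let cf = cleared_fitness f pheno_dist 1 \<kappa> (P @ [y])
      in pmf_of_set {k. k < length P \<and> cf k = Min (cf ` {..<length P})} \<bind>
           (\<lambda>z. return_pmf (if cf z \<le> cf (length P) then remove_at z (P @ [y]) else P)))"

lemma ea_step_eq_replace_worst:
  "ea_step n f pheno_dist 1 \<kappa> P =
     pmf_of_set {..<length P} \<bind> (\<lambda>i. mutate (1 / real n) (P ! i) \<bind> replace_worst f \<kappa> P)"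
  unfolding ea_step_def replace_worst_def Let_def ..

lemma set_pmf_replace_worst:
  assumes "P \<noteq> []" "R \<in> set_pmf (replace_worst f \<kappa> P y)"
  obtains z where "z < length P"
    "\<And>k. k < length P \<Longrightarrow> cleared_fitness f pheno_dist 1 \<kappa> (P @ [y]) z \<le> cleared_fitness f pheno_dist 1 \<kappa> (P @ [y]) k"
    "R = (if cleared_fitness f pheno_dist 1 \<kappa> (P @ [y]) z \<le> cleared_fitness f pheno_dist 1 \<kappa> (P @ [y]) (length P)
          then remove_at z (P @ [y]) else P)"
proof -
  define cf where "cf = cleared_fitness f pheno_dist 1 \<kappa> (P @ [y])"
  have "Min (cf ` {..<length P}) \<in> cf ` {..<length P}" using assms(1) by (intro Min_in) auto
  then have "{k. k < length P \<and> cf k = Min (cf ` {..<length P})} \<noteq> {}" by auto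
  with assms(2) obtain z where "z < length P" "cf z = Min (cf ` {..<length P})"
    and "R = (if cf z \<le> cf (length P) then remove_at z (P @ [y]) else P)"
    unfolding replace_worst_def cf_def[symmetric] Let_def by (auto simp: set_bind_pmf)
  moreover have "cf z \<le> cf k" if "k < length P" for k
    using that \<open>cf z = Min (cf ` {..<length P})\<close> by simp
  ultimately show ?thesis using that unfolding cf_def by blast
qed

text \<open>If some member of \<open>P @ [y]\<close> is cleared, a worst individual has cleared fitness at most
  zero. Then either \<open>y\<close> is rejected, or a cleared individual is removed whose level is still
  represented by its clearing winner; an offspring on a new level is a winner and is accepted.\<close>

lemma replace_worst_levels:
  fixes f :: "bitstring \<Rightarrow> real" and P :: population and y :: bitstring and \<kappa> :: nat
  defines "cf \<equiv> cleared_fitness f pheno_dist 1 \<kappa> (P @ [y])"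
  assumes pos: "\<forall>x\<in>set (P @ [y]). 0 < f x"
    and cleared: "\<exists>k\<le>length P. cf k \<le> 0"
    and z: "z < length P" "\<And>k. k < length P \<Longrightarrow> cf z \<le> cf k"
    and R: "R = (if cf z \<le> cf (length P) then remove_at z (P @ [y]) else P)"
  shows "levels P \<subseteq> levels R" and "ones y \<notin> levels P \<Longrightarrow> ones y \<in> levels R"
proof -
  let ?Q = "P @ [y]"
  have worst: "cf z \<le> 0 \<or> cf (length P) \<le> 0"
    using cleared z(2) by (metis le_neq_implies_less nless_le order.trans)
  have nth_Q: "?Q ! k = P ! k" if "k < length P" for k
    using that by (simp add: nth_append)
  have partner: "\<exists>i<length ?Q. i \<noteq> k \<and> ones (?Q ! i) = ones (?Q ! k)" if "k < length ?Q" "cf k \<le> 0" for k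
    using cleared_fitness_cases[OF that(1), of f \<kappa>] pos that nth_mem[OF that(1)] unfolding cf_def by force
  show "levels P \<subseteq> levels R"
  proof (cases "cf z \<le> cf (length P)")
    case True
    then have R: "R = remove_at z ?Q" and "cf z \<le> 0" using R worst by auto
    then obtain i where i: "i < length ?Q" "i \<noteq> z" "ones (?Q ! i) = ones (P ! z)"
      using partner[of z] z(1) nth_Q[OF z(1)] by auto
    show ?thesis
    proof
      fix l assume "l \<in> levels P"
      then obtain k where k: "k < length P" "l = ones (P ! k)" by (auto simp: levels_def in_set_conv_nth)
      show "l \<in> levels R"
      proof (cases "k = z")
        case True
        then show ?thesis using remove_at_nth_mem[OF i(1,2)] i(3) k R unfolding levels_def by (metis image_eqI)
      next
        case False
        then show ?thesis using remove_at_nth_mem[of k ?Q z] nth_Q[OF k(1)] k R by (auto simp: levels_def)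
      qed
    qed
  qed (use R in simp)
  show "ones y \<in> levels R" if new: "ones y \<notin> levels P"
  proof -
    have "\<not> cf (length P) \<le> 0"
    proof
      assume "cf (length P) \<le> 0"
      then obtain i where "i < length P" "ones (P ! i) = ones y"
        using partner[of "length P"] by (auto simp: nth_append less_Suc_eq)
      then show False using new unfolding levels_def by (metis image_eqI nth_mem)
    qed
    then have "R = remove_at z ?Q" using R worst by auto
    then show ?thesis using remove_at_nth_mem[of "length P" ?Q z] z(1) by (auto simp: levels_def)
  qed
qed

lemma replace_worst_length:
  assumes "z < length P"
    and "R = (if c then remove_at z (P @ [y]) else P)"
  shows "length R = length P" and "set R \<subseteq> set P \<union> {y}"
  using assms set_remove_at_subset[of z "P @ [y]"] by (auto simp: length_remove_at)

section \<open>Standard bit mutation\<close>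

lemma ones_eq_count_list: "ones x = count_list x True"
  unfolding ones_def by (induction x) auto

lemma ones_add_count_list_False: "ones x + count_list x False = length x"
  unfolding ones_def by (induction x) auto

lemma ones_le_length: "ones x \<le> length x"
  unfolding ones_def by simp

lemma ones_eq_0_imp:
  assumes "ones x = 0"
  shows "x = replicate (length x) False"
proof -
  have "\<forall>b\<in>set x. b = False" using assms unfolding ones_eq_count_list count_list_0_iff by auto
  then show ?thesis by (simp add: replicate_length_same)
qed

lemma ones_eq_length_imp:
  assumes "ones x = length x"
  shows "x = replicate (length x) True"
proof -
  have "count_list x False = 0" using assms ones_add_count_list_False[of x] by simp
  then have "\<forall>b\<in>set x. b = True" unfolding count_list_0_iff by (metis (full_types))
  then show ?thesis by (simp add: replicate_length_same)
qed

lemma set_pmf_mutate: "set_pmf (mutate p x) \<subseteq> {y. length y = length x}"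
  by (induction x) auto

lemma measure_bernoulli_bind_pmf:
  assumes "0 \<le> p" "p \<le> 1"
  shows "measure_pmf.prob (bernoulli_pmf p \<bind> h) A =
         p * measure_pmf.prob (h True) A + (1 - p) * measure_pmf.prob (h False) A"
proof -
  define a where "a = measure_pmf.prob (h True) A"
  define b where "b = measure_pmf.prob (h False) A"
  have ab: "0 \<le> a" "0 \<le> b" unfolding a_def b_def by auto
  have "emeasure (measure_pmf (bernoulli_pmf p \<bind> h)) A = (\<integral>\<^sup>+c. emeasure (h c) A \<partial>bernoulli_pmf p)"
    by (rule emeasure_bind_pmf)
  also have "\<dots> = emeasure (h True) A * ennreal p + emeasure (h False) A * ennreal (1 - p)"
    by (rule nn_integral_bernoulli_pmf) (use assms in auto)
  also have "\<dots> = ennreal a * ennreal p + ennreal b * ennreal (1 - p)"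
    unfolding a_def b_def measure_pmf.emeasure_eq_measure ..
  also have "\<dots> = ennreal (a * p) + ennreal (b * (1 - p))"
    using ab assms by (simp only: ennreal_mult[symmetric] diff_ge_0_iff_ge)
  also have "\<dots> = ennreal (a * p + b * (1 - p))"
    using ab assms by (intro ennreal_plus[symmetric]) auto
  finally have "ennreal (measure_pmf.prob (bernoulli_pmf p \<bind> h) A) = ennreal (a * p + b * (1 - p))"
    unfolding measure_pmf.emeasure_eq_measure .
  then have "measure_pmf.prob (bernoulli_pmf p \<bind> h) A = a * p + b * (1 - p)"
    using ab assms by (subst (asm) ennreal_inj) auto
  then show ?thesis unfolding a_def b_def by (simp add: mult.commute)
qed

lemma measure_mutate_Cons:
  assumes "0 \<le> p" "p \<le> 1"
  shows "measure_pmf.prob (mutate p (b # bs)) A =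
     p * measure_pmf.prob (mutate p bs) {r. (\<not> b) # r \<in> A} +
     (1 - p) * measure_pmf.prob (mutate p bs) {r. b # r \<in> A}"
proof -
  have "mutate p (b # bs) = bernoulli_pmf p \<bind> (\<lambda>c. map_pmf (\<lambda>r. (b \<noteq> c) # r) (mutate p bs))"
    by (simp add: map_pmf_def)
  then show ?thesis by (simp add: measure_bernoulli_bind_pmf[OF assms] vimage_def)
qed

lemma measure_mutate_count_unchanged:
  assumes "0 \<le> p" "p \<le> 1"
  shows "(1 - p) ^ length x \<le> measure_pmf.prob (mutate p x) {y. count_list y c = count_list x c}"
proof (induction x)
  case Nil
  then show ?case by (simp add: measure_pmf.prob_eq_1 AE_measure_pmf_iff)
next
  case (Cons b bs)
  have "(1 - p) ^ length (b # bs) \<le> (1 - p) * measure_pmf.prob (mutate p bs) {y. count_list y c = count_list bs c}"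
    using Cons assms by (simp add: mult_left_mono)
  also have "\<dots> \<le> measure_pmf.prob (mutate p (b # bs)) {y. count_list y c = count_list (b # bs) c}"
    unfolding measure_mutate_Cons[OF assms] using assms by simp
  finally show ?case .
qed

text \<open>Only the mutations flipping exactly one \<open>c\<close>-bit and nothing else are counted.\<close>

lemma measure_mutate_count_decrease:
  assumes "0 \<le> p" "p \<le> 1"
  shows "real (count_list x c) * p * (1 - p) ^ length x
           \<le> measure_pmf.prob (mutate p x) {y. count_list y c + 1 = count_list x c}"
proof (induction x)
  case Nil
  then show ?case by simp
next
  case (Cons b bs)
  let ?pr = "\<lambda>S. measure_pmf.prob (mutate p bs) S"
  let ?L = "length bs"
  have pow: "0 \<le> (1 - p) ^ ?L" "(1 - p) ^ Suc ?L \<le> (1 - p) ^ ?L"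
    using assms by (auto intro: mult_left_le_one_le)
  have rest: "(1 - p) * (real (count_list bs c) * p * (1 - p) ^ ?L)
      \<le> (1 - p) * ?pr {y. count_list y c + 1 = count_list bs c}"
    using Cons assms by (intro mult_left_mono) auto
  have target: "measure_pmf.prob (mutate p (b # bs)) {y. count_list y c + 1 = count_list (b # bs) c} =
      p * ?pr {r. count_list ((\<not> b) # r) c + 1 = count_list (b # bs) c} +
      (1 - p) * ?pr {y. count_list y c + 1 = count_list bs c}"
    unfolding measure_mutate_Cons[OF assms] by simp
  show ?case
  proof (cases "b = c")
    case True
    have flip: "{r. count_list ((\<not> b) # r) c + 1 = count_list (b # bs) c} = {y. count_list y c = count_list bs c}"
      using True by auto
    have "p * (1 - p) ^ Suc ?L \<le> p * ?pr {y. count_list y c = count_list bs c}"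
      using measure_mutate_count_unchanged[OF assms, of bs c] pow assms
      by (meson mult_left_mono order_trans)
    moreover have "real (count_list (b # bs) c) * p * (1 - p) ^ length (b # bs) =
        p * (1 - p) ^ Suc ?L + (1 - p) * (real (count_list bs c) * p * (1 - p) ^ ?L)"
      using True by (simp add: algebra_simps)
    ultimately show ?thesis unfolding target flip using rest by linarith
  next
    case False
    have "real (count_list (b # bs) c) * p * (1 - p) ^ length (b # bs) =
        (1 - p) * (real (count_list bs c) * p * (1 - p) ^ ?L)"
      using False by (simp add: algebra_simps)
    moreover have "0 \<le> p * ?pr {r. count_list ((\<not> b) # r) c + 1 = count_list (b # bs) c}"
      using assms by simp
    ultimately show ?thesis unfolding target using rest by linarith
  qed
qed

lemma one_minus_inverse_power_ge:
  assumes "2 \<le> n"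
  shows "1 / 9 \<le> (1 - 1 / real n) ^ n"
proof -
  have x: "0 \<le> 1 / real n" "1 / real n \<le> 1 / 2" using assms by (auto simp: field_simps)
  have "- 2 \<le> real n * (- (1 / real n) - 2 * (1 / real n)\<^sup>2)"
    using assms by (simp add: field_simps power2_eq_square)
  also have "\<dots> \<le> real n * ln (1 - 1 / real n)"
    using ln_one_minus_pos_lower_bound[OF x] by (intro mult_left_mono) auto
  also have "\<dots> = ln ((1 - 1 / real n) ^ n)"
    using assms by (simp add: ln_realpow)
  finally have "exp (- 2) \<le> (1 - 1 / real n) ^ n"
    using assms by (simp add: ln_ge_iff)
  moreover have "1 / 9 \<le> exp (- 2 :: real)"
  proof -
    have "exp (2::real) = exp 1 * exp 1" by (simp flip: exp_add)
    also have "\<dots> \<le> 3 * 3" using exp_le by (intro mult_mono) auto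
    finally show ?thesis by (simp add: exp_minus field_simps)
  qed
  ultimately show ?thesis by linarith
qed

lemma measure_mutate_inverse_count_decrease:
  assumes "2 \<le> length x"
  shows "real (count_list x c) / (9 * real (length x))
           \<le> measure_pmf.prob (mutate (1 / real (length x)) x) {y. count_list y c + 1 = count_list x c}"
proof -
  let ?n = "real (length x)"
  have "real (count_list x c) / (9 * ?n) = real (count_list x c) * (1 / ?n) * (1 / 9)" by simp
  also have "\<dots> \<le> real (count_list x c) * (1 / ?n) * (1 - 1 / ?n) ^ length x"
    using one_minus_inverse_power_ge[OF assms] by (intro mult_left_mono) auto
  also have "\<dots> \<le> measure_pmf.prob (mutate (1 / ?n) x) {y. count_list y c + 1 = count_list x c}"
    using assms by (intro measure_mutate_count_decrease) (auto simp: divide_le_eq_1)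
  finally show ?thesis .
qed

section \<open>Expected hitting times from potential functions\<close>

text \<open>The left-hand side is the expected number of steps the chain spends in \<open>B\<close>.\<close>

lemma suminf_prob_le_potential:
  fixes X :: "nat \<Rightarrow> 's pmf" and K :: "'s \<Rightarrow> 's pmf" and g :: "'s \<Rightarrow> ennreal"
  assumes X: "\<And>t. X (Suc t) = bind_pmf (X t) K"
    and S0: "set_pmf (X 0) \<subseteq> S" and SK: "\<And>s. s \<in> S \<Longrightarrow> set_pmf (K s) \<subseteq> S"
    and drift: "\<And>s. s \<in> S \<Longrightarrow> indicator B s + (\<integral>\<^sup>+ s'. g s' \<partial>K s) \<le> g s"
  shows "(\<Sum>t. emeasure (measure_pmf (X t)) B) \<le> (\<integral>\<^sup>+ s. g s \<partial>X 0)"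
proof -
  have supp: "set_pmf (X t) \<subseteq> S" for t
    by (induction t) (use S0 SK in \<open>auto simp: X\<close>)
  have partial: "(\<Sum>t<N. emeasure (measure_pmf (X t)) B) + (\<integral>\<^sup>+ s. g s \<partial>X N) \<le> (\<integral>\<^sup>+ s. g s \<partial>X 0)" for N
  proof (induction N)
    case (Suc N)
    have "emeasure (measure_pmf (X N)) B + (\<integral>\<^sup>+ s. g s \<partial>X (Suc N)) =
          (\<integral>\<^sup>+ s. indicator B s + (\<integral>\<^sup>+ s'. g s' \<partial>K s) \<partial>X N)"
      unfolding X by (simp add: nn_integral_add)
    also have "\<dots> \<le> (\<integral>\<^sup>+ s. g s \<partial>X N)"
      by (rule nn_integral_mono_AE, rule AE_pmfI) (use supp drift in blast)
    finally have "(\<Sum>t<Suc N. emeasure (measure_pmf (X t)) B) + (\<integral>\<^sup>+ s. g s \<partial>X (Suc N)) \<le>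
        (\<Sum>t<N. emeasure (measure_pmf (X t)) B) + (\<integral>\<^sup>+ s. g s \<partial>X N)"
      by (simp add: add.assoc add_left_mono)
    then show ?case using Suc.IH by (rule order_trans)
  qed simp
  show ?thesis
  proof (rule suminf_le_const)
    fix N
    show "(\<Sum>t<N. emeasure (measure_pmf (X t)) B) \<le> (\<integral>\<^sup>+ s. g s \<partial>X 0)"
      using partial[of N] by (rule order_trans[rotated]) simp
  qed simp
qed

lemma nn_integral_drift_le:
  fixes M :: "'a pmf" and f :: "'a \<Rightarrow> real"
  assumes pointwise: "\<And>R. R \<in> set_pmf M \<Longrightarrow> f R + D * indicator E R \<le> c"
    and "0 \<le> D" and prob: "1 \<le> D * measure_pmf.prob M E" and "\<And>R. 0 \<le> f R"
  shows "1 + (\<integral>\<^sup>+R. ennreal (f R) \<partial>M) \<le> ennreal c"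
proof -
  have "1 \<le> ennreal (D * measure_pmf.prob M E)" using prob by simp
  also have "\<dots> = (\<integral>\<^sup>+R. ennreal D * indicator E R \<partial>M)"
    using \<open>0 \<le> D\<close> by (simp add: measure_pmf.emeasure_eq_measure ennreal_mult nn_integral_cmult_indicator)
  finally have "1 + (\<integral>\<^sup>+R. ennreal (f R) \<partial>M) \<le> (\<integral>\<^sup>+R. ennreal D * indicator E R + ennreal (f R) \<partial>M)"
    by (simp add: nn_integral_add add_right_mono)
  also have "\<dots> \<le> (\<integral>\<^sup>+R. ennreal c \<partial>M)"
  proof (rule nn_integral_mono_AE, rule AE_pmfI)
    fix R assume R: "R \<in> set_pmf M"
    have "ennreal D * indicator E R + ennreal (f R) = ennreal (D * indicator E R + f R)"
      using \<open>0 \<le> D\<close> assms(4)[of R] by (simp add: indicator_def)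
    also have "\<dots> \<le> ennreal c" using pointwise[OF R] by (intro ennreal_leI) simp
    finally show "ennreal D * indicator E R + ennreal (f R) \<le> ennreal c" .
  qed
  finally show ?thesis by simp
qed

lemma harm_eq_pred: "0 < m \<Longrightarrow> harm m = harm (m - 1) + 1 / real m"
  by (cases m) (simp_all add: harm_Suc inverse_eq_divide)

lemma harm_le_1_plus_ln: "1 \<le> n \<Longrightarrow> harm n \<le> 1 + ln (real n)"
  using euler_mascheroni_sequence_decreasing[of 1 n] by (simp add: harm_def)

section \<open>The (\<open>\<mu>\<close>+1) EA with phenotypic clearing on a function of unitation\<close>

lemma set_pmf_init_pop: "P \<in> set_pmf (init_pop n m) \<Longrightarrow> length P = m \<and> (\<forall>x\<in>set P. length x = n)"
proof (induction m arbitrary: P)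
  case (Suc m)
  have "finite {xs :: bitstring. length xs = n}"
    using finite_lists_length_eq[of "UNIV :: bool set" n] by simp
  moreover have "{xs :: bitstring. length xs = n} \<noteq> {}"
    using length_replicate[of n False] by blast
  ultimately have "set_pmf (uniform_string n) = {xs. length xs = n}"
    unfolding uniform_string_def by (rule set_pmf_of_set[rotated])
  then show ?case using Suc by auto
qed simp

locale unitation_clearing =
  fixes n \<mu> \<kappa> :: nat and u :: "nat \<Rightarrow> real"
  assumes kappa_ge_1: "1 \<le> \<kappa>" and mu_ge: "(n + 1) * \<kappa> \<le> \<mu>" and u_pos: "\<forall>k\<le>n. 0 < u k"
begin

abbreviation step :: "population \<Rightarrow> population pmf" where
  "step P \<equiv> ea_step n (\<lambda>x. u (ones x)) pheno_dist 1 \<kappa> P"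

definition valid_pop :: "population \<Rightarrow> bool" where
  "valid_pop P \<longleftrightarrow> length P = \<mu> \<and> (\<forall>x\<in>set P. length x = n)"

lemma mu_pos: "0 < \<mu>"
  using kappa_ge_1 mu_ge by (metis add_gr_0 less_le_trans mult_pos_pos zero_less_one)

lemma levels_bounds:
  assumes "valid_pop P"
  shows "finite (levels P)" "levels P \<noteq> {}" "\<And>l. l \<in> levels P \<Longrightarrow> l \<le> n"
  using assms mu_pos ones_le_length by (auto simp: valid_pop_def levels_def)

lemma replace_worst_support:
  assumes P: "valid_pop P" and y: "length y = n"
    and R: "R \<in> set_pmf (replace_worst (\<lambda>x. u (ones x)) \<kappa> P y)"
  shows "valid_pop R" "levels P \<subseteq> levels R" "ones y \<notin> levels P \<Longrightarrow> ones y \<in> levels R"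
proof -
  let ?Q = "P @ [y]"
  let ?cf = "cleared_fitness (\<lambda>x. u (ones x)) pheno_dist 1 \<kappa> ?Q"
  have len: "length P = \<mu>" "length ?Q = Suc \<mu>" and Qn: "\<forall>x\<in>set ?Q. length x = n"
    using P y by (auto simp: valid_pop_def)
  then have pos: "\<forall>x\<in>set ?Q. 0 < u (ones x)" using u_pos ones_le_length by metis
  have "\<exists>k\<le>length P. ?cf k \<le> 0"
  proof (rule ccontr)
    assume "\<not> ?thesis"
    then have "{k. k < length ?Q \<and> 0 < ?cf k} = {..<Suc \<mu>}" using len by (auto simp: less_Suc_eq_le)
    moreover have "card {k. k < length ?Q \<and> 0 < ?cf k} \<le> (n + 1) * \<kappa>"
      using Qn ones_le_length by (intro card_winners_le kappa_ge_1) metis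
    ultimately show False using mu_ge by simp
  qed
  moreover obtain z where z: "z < length P" "\<And>k. k < length P \<Longrightarrow> ?cf z \<le> ?cf k"
    and Rz: "R = (if ?cf z \<le> ?cf (length P) then remove_at z ?Q else P)"
    using set_pmf_replace_worst[OF _ R] len mu_pos by auto
  ultimately show "levels P \<subseteq> levels R" "ones y \<notin> levels P \<Longrightarrow> ones y \<in> levels R"
    using replace_worst_levels[OF pos] by blast+
  show "valid_pop R"
    using replace_worst_length[OF z(1) Rz] len Qn by (auto simp: valid_pop_def)
qed

lemma step_support:
  assumes "valid_pop P" "R \<in> set_pmf (step P)"
  shows "valid_pop R" "levels P \<subseteq> levels R"
proof -
  have "set_pmf (pmf_of_set {..<length P}) = {..<length P}"
    using assms(1) mu_pos by (intro set_pmf_of_set) (auto simp: valid_pop_def)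
  with assms obtain i y where "i < length P" "y \<in> set_pmf (mutate (1 / real n) (P ! i))"
    and R: "R \<in> set_pmf (replace_worst (\<lambda>x. u (ones x)) \<kappa> P y)"
    unfolding ea_step_eq_replace_worst by auto
  then have "length y = n" using set_pmf_mutate assms(1) by (force simp: valid_pop_def)
  then show "valid_pop R" "levels P \<subseteq> levels R" using replace_worst_support[OF assms(1) _ R] by auto
qed

lemma step_levels_bounds:
  assumes "valid_pop P" "R \<in> set_pmf (step P)"
  shows "Min (levels R) \<le> Min (levels P)" "Max (levels P) \<le> Max (levels R)" "Max (levels R) \<le> n"
  using step_support[OF assms] levels_bounds[OF assms(1)] levels_bounds[OF step_support(1)[OF assms]]
  by (auto intro: Min_antimono Max_mono)

text \<open>A new level is reached if the parent chosen with probability \<open>1/\<mu>\<close> produces an offspring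
  on it.\<close>

lemma prob_step_new_level:
  assumes P: "valid_pop P" and k: "k < \<mu>" and new: "l \<notin> levels P"
    and Y: "\<And>y. length y = n \<Longrightarrow> y \<in> Y \<Longrightarrow> ones y = l"
  shows "measure_pmf.prob (mutate (1 / real n) (P ! k)) Y / real \<mu>
           \<le> measure_pmf.prob (step P) {R. l \<in> levels R}"
proof -
  let ?M = "\<lambda>j. mutate (1 / real n) (P ! j)"
  let ?rw = "replace_worst (\<lambda>x. u (ones x)) \<kappa> P"
  let ?E = "{R. l \<in> levels R}"
  have len: "length P = \<mu>" using P by (simp add: valid_pop_def)
  have "emeasure (?M k) Y = (\<integral>\<^sup>+y. indicator Y y \<partial>?M k)"
    by simp
  also have "\<dots> \<le> (\<integral>\<^sup>+y. emeasure (?rw y) ?E \<partial>?M k)"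
  proof (rule nn_integral_mono_AE, rule AE_pmfI)
    fix y assume "y \<in> set_pmf (?M k)"
    then have ly: "length y = n" using set_pmf_mutate P k by (force simp: valid_pop_def)
    show "indicator Y y \<le> emeasure (?rw y) ?E"
    proof (cases "y \<in> Y")
      case True
      have "emeasure (?rw y) ?E = 1"
        using replace_worst_support(3)[OF P ly] new Y[OF ly True]
        by (intro measure_pmf.emeasure_eq_1_AE AE_pmfI) auto
      then show ?thesis by (simp add: indicator_def)
    qed simp
  qed
  also have "\<dots> = emeasure (bind_pmf (?M k) ?rw) ?E"
    by simp
  also have "\<dots> \<le> (\<Sum>j<\<mu>. emeasure (bind_pmf (?M j) ?rw) ?E)"
    by (rule member_le_sum) (use k in auto)
  finally have "emeasure (?M k) Y / of_nat \<mu> \<le> (\<Sum>j<\<mu>. emeasure (bind_pmf (?M j) ?rw) ?E) / of_nat \<mu>"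
    by (intro divide_right_mono_ennreal)
  also have "\<dots> = emeasure (step P) ?E"
    unfolding ea_step_eq_replace_worst len emeasure_bind_pmf
    using mu_pos by (subst nn_integral_pmf_of_set) auto
  finally show ?thesis
    using mu_pos by (simp add: measure_pmf.emeasure_eq_measure ennreal_of_nat_eq_real_of_nat divide_ennreal)
qed

definition gap_potential :: "population \<Rightarrow> real" where
  "gap_potential P = harm (Min (levels P)) + harm (n - Max (levels P))"

lemma gap_potential_nonneg: "0 \<le> gap_potential P"
  unfolding gap_potential_def by (simp add: harm_nonneg add_nonneg_nonneg)

lemma gap_potential_le:
  assumes "valid_pop P"
  shows "gap_potential P \<le> 2 * harm n"
proof -
  have "Min (levels P) \<le> n" using levels_bounds[OF assms] Min_in by blast
  then have "harm (Min (levels P)) \<le> (harm n :: real)" "harm (n - Max (levels P)) \<le> (harm n :: real)"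
    by (simp_all add: harm_mono)
  then show ?thesis unfolding gap_potential_def by simp
qed

lemma drift_from_new_level:
  assumes n: "0 < n" and P: "valid_pop P" and k: "k < \<mu>" and new: "l \<notin> levels P"
    and Y: "\<And>y. length y = n \<Longrightarrow> y \<in> Y \<Longrightarrow> ones y = l"
    and q: "0 < q" "q / (9 * real n) \<le> measure_pmf.prob (mutate (1 / real n) (P ! k)) Y"
    and gain: "\<And>R. R \<in> set_pmf (step P) \<Longrightarrow>
                 gap_potential R + indicator {R. l \<in> levels R} R / q \<le> gap_potential P"
  shows "1 + (\<integral>\<^sup>+R. ennreal (9 * real \<mu> * real n * gap_potential R) \<partial>step P)
           \<le> ennreal (9 * real \<mu> * real n * gap_potential P)"
proof -
  define C where "C = 9 * real \<mu> * real n"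
  have C: "0 < C" using n mu_pos by (simp add: C_def)
  have "q / (9 * real n) / real \<mu> \<le> measure_pmf.prob (step P) {R. l \<in> levels R}"
    using q(2) prob_step_new_level[OF P k new Y] by (meson divide_right_mono of_nat_0_le_iff order_trans)
  then have "C / q * (q / (9 * real n) / real \<mu>) \<le> C / q * measure_pmf.prob (step P) {R. l \<in> levels R}"
    using C q(1) by (intro mult_left_mono) auto
  then have prob: "1 \<le> C / q * measure_pmf.prob (step P) {R. l \<in> levels R}"
    using C q(1) n mu_pos by (simp add: C_def)
  have pointwise: "C * gap_potential R + C / q * indicator {R. l \<in> levels R} R \<le> C * gap_potential P"
    if "R \<in> set_pmf (step P)" for R
    using mult_left_mono[OF gain[OF that], of C] C by (simp add: distrib_left)
  show ?thesis
    using nn_integral_drift_le[where f = "\<lambda>R. C * gap_potential R" and D = "C / q", OF pointwise _ prob]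
      C q(1) gap_potential_nonneg unfolding C_def by simp
qed

lemma drift_min_level:
  assumes n: "2 \<le> n" and P: "valid_pop P" and pos: "0 < Min (levels P)"
  shows "1 + (\<integral>\<^sup>+R. ennreal (9 * real \<mu> * real n * gap_potential R) \<partial>step P)
           \<le> ennreal (9 * real \<mu> * real n * gap_potential P)"
proof -
  define m where "m = Min (levels P)"
  note bounds = levels_bounds[OF P]
  have "m \<in> levels P" unfolding m_def using bounds Min_in by blast
  then obtain x where "x \<in> set P" "ones x = m" by (auto simp: levels_def)
  then obtain k where k: "k < \<mu>" "ones (P ! k) = m" and len: "length (P ! k) = n"
    using P unfolding valid_pop_def by (metis in_set_conv_nth)
  have new: "m - 1 \<notin> levels P" using pos bounds unfolding m_def by (meson Min_le diff_less le_less_trans less_irrefl zero_less_one)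
  show ?thesis
  proof (rule drift_from_new_level[OF _ P k(1) new])
    let ?Y = "{y. count_list y True + 1 = count_list (P ! k) True}"
    show "real m / (9 * real n) \<le> measure_pmf.prob (mutate (1 / real n) (P ! k)) ?Y"
      using measure_mutate_inverse_count_decrease[of "P ! k" True] len n k(2)
      by (simp add: ones_eq_count_list)
    show "ones y = m - 1" if "y \<in> ?Y" for y
      using that k(2) by (simp add: ones_eq_count_list)
    show "gap_potential R + indicator {R. m - 1 \<in> levels R} R / real m \<le> gap_potential P"
      if R: "R \<in> set_pmf (step P)" for R
    proof -
      note bR = step_levels_bounds[OF P R] levels_bounds[OF step_support(1)[OF P R]]
      have "harm (Min (levels R)) + indicator {R. m - 1 \<in> levels R} R / real m \<le> harm m"
      proof (cases "m - 1 \<in> levels R")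
        case True
        then have "harm (Min (levels R)) \<le> (harm (m - 1) :: real)" using bR by (intro harm_mono Min_le) auto
        then show ?thesis using harm_eq_pred[of m] pos True by (simp add: m_def)
      qed (use bR harm_mono in \<open>simp add: m_def\<close>)
      moreover have "harm (n - Max (levels R)) \<le> (harm (n - Max (levels P)) :: real)"
        using bR by (intro harm_mono diff_le_mono2) auto
      ultimately show ?thesis unfolding gap_potential_def m_def by simp
    qed
  qed (use n pos in \<open>auto simp: m_def\<close>)
qed

lemma drift_max_level:
  assumes n: "2 \<le> n" and P: "valid_pop P" and lt: "Max (levels P) < n"
  shows "1 + (\<integral>\<^sup>+R. ennreal (9 * real \<mu> * real n * gap_potential R) \<partial>step P)
           \<le> ennreal (9 * real \<mu> * real n * gap_potential P)"
proof -
  define M where "M = Max (levels P)"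
  note bounds = levels_bounds[OF P]
  have "M \<in> levels P" unfolding M_def using bounds Max_in by blast
  then obtain x where "x \<in> set P" "ones x = M" by (auto simp: levels_def)
  then obtain k where k: "k < \<mu>" "ones (P ! k) = M" and len: "length (P ! k) = n"
    using P unfolding valid_pop_def by (metis in_set_conv_nth)
  have zeros: "count_list (P ! k) False = n - M"
    using ones_add_count_list_False[of "P ! k"] len k(2) by simp
  have new: "M + 1 \<notin> levels P" using Max_ge[OF bounds(1)] unfolding M_def by fastforce
  show ?thesis
  proof (rule drift_from_new_level[OF _ P k(1) new])
    let ?Y = "{y. count_list y False + 1 = count_list (P ! k) False}"
    show "real (n - M) / (9 * real n) \<le> measure_pmf.prob (mutate (1 / real n) (P ! k)) ?Y"
      using measure_mutate_inverse_count_decrease[of "P ! k" False] len n zeros by simp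
    show "ones y = M + 1" if "length y = n" "y \<in> ?Y" for y
      using that zeros ones_add_count_list_False[of y] lt unfolding M_def by auto
    show "gap_potential R + indicator {R. M + 1 \<in> levels R} R / real (n - M) \<le> gap_potential P"
      if R: "R \<in> set_pmf (step P)" for R
    proof -
      note bR = step_levels_bounds[OF P R] levels_bounds[OF step_support(1)[OF P R]]
      have "harm (n - Max (levels R)) + indicator {R. M + 1 \<in> levels R} R / real (n - M) \<le> harm (n - M)"
      proof (cases "M + 1 \<in> levels R")
        case True
        then have "M + 1 \<le> Max (levels R)" using bR by (intro Max_ge) auto
        then have "harm (n - Max (levels R)) \<le> (harm (n - M - 1) :: real)" by (intro harm_mono) simp
        then show ?thesis using harm_eq_pred[of "n - M"] lt True by (simp add: M_def)
      next
        case False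
        have "harm (n - Max (levels R)) \<le> (harm (n - M) :: real)"
          using bR by (intro harm_mono diff_le_mono2) (simp add: M_def)
        then show ?thesis using False by simp
      qed
      moreover have "harm (Min (levels R)) \<le> (harm (Min (levels P)) :: real)"
        using bR by (intro harm_mono) auto
      ultimately show ?thesis unfolding gap_potential_def M_def by simp
    qed
  qed (use n lt in \<open>auto simp: M_def\<close>)
qed

definition state_kernel :: "population \<times> bool \<times> bool \<Rightarrow> (population \<times> bool \<times> bool) pmf" where
  "state_kernel = (\<lambda>(P, a, b). map_pmf (\<lambda>P'. (P', a \<or> replicate n False \<in> set P', b \<or> replicate n True \<in> set P'))
                            (step P))"

definition consistent_state :: "population \<times> bool \<times> bool \<Rightarrow> bool" where
  "consistent_state = (\<lambda>(P, a, b). valid_pop P \<and> (replicate n False \<in> set P \<longrightarrow> a) \<and> (replicate n True \<in> set P \<longrightarrow> b))"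

lemma set_pmf_state_kernel: "consistent_state s \<Longrightarrow> s' \<in> set_pmf (state_kernel s) \<Longrightarrow> consistent_state s'"
  using step_support(1) by (auto simp: state_kernel_def consistent_state_def)

lemma extreme_levels_found:
  assumes "valid_pop P" "0 \<in> levels P" "n \<in> levels P"
  shows "replicate n False \<in> set P" "replicate n True \<in> set P"
proof -
  obtain x y where "x \<in> set P" "ones x = 0" "y \<in> set P" "ones y = n"
    using assms(2,3) by (auto simp: levels_def)
  moreover have "length x = n" "length y = n"
    using assms(1) calculation by (auto simp: valid_pop_def)
  ultimately show "replicate n False \<in> set P" "replicate n True \<in> set P"
    using ones_eq_0_imp[of x] ones_eq_length_imp[of y] by auto
qed

lemma state_kernel_drift:
  assumes n: "2 \<le> n" and s: "consistent_state s"
  shows "indicator {s. \<not> (fst (snd s) \<and> snd (snd s))} s +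
           (\<integral>\<^sup>+s'. ennreal (9 * real \<mu> * real n * gap_potential (fst s')) \<partial>state_kernel s)
         \<le> ennreal (9 * real \<mu> * real n * gap_potential (fst s))"
proof -
  obtain P a b where s_eq: "s = (P, a, b)" by (cases s)
  have P: "valid_pop P" using s by (simp add: s_eq consistent_state_def)
  note bounds = levels_bounds[OF P]
  have integral: "(\<integral>\<^sup>+s'. ennreal (9 * real \<mu> * real n * gap_potential (fst s')) \<partial>state_kernel s) =
      (\<integral>\<^sup>+R. ennreal (9 * real \<mu> * real n * gap_potential R) \<partial>step P)"
    by (simp add: s_eq state_kernel_def)
  show ?thesis
  proof (cases "Min (levels P) = 0 \<and> Max (levels P) = n")
    case True
    then have extremes: "0 \<in> levels P" "n \<in> levels P" using bounds Min_in Max_in by metis+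
    then have "a \<and> b" using s extreme_levels_found[OF P] by (auto simp: s_eq consistent_state_def)
    moreover have "gap_potential R = 0" if "R \<in> set_pmf (step P)" for R
    proof -
      note bR = step_support[OF P that] step_levels_bounds[OF P that] levels_bounds[OF step_support(1)[OF P that]]
      have "0 \<in> levels R" "n \<in> levels R" using bR extremes by auto
      then have "Min (levels R) = 0" "Max (levels R) = n"
        using bR by (meson Min_le le_zero_eq, meson Max_ge le_antisym)
      then show ?thesis by (simp add: gap_potential_def harm_def)
    qed
    then have "(\<integral>\<^sup>+R. ennreal (9 * real \<mu> * real n * gap_potential R) \<partial>step P) = 0"
      by (simp add: nn_integral_0_iff_AE AE_pmfI)
    ultimately show ?thesis unfolding integral by (simp add: s_eq)
  next
    case False
    then have "0 < Min (levels P) \<or> Max (levels P) < n"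
      using bounds Max_in by (metis le_neq_implies_less not_gr_zero)
    then have "1 + (\<integral>\<^sup>+R. ennreal (9 * real \<mu> * real n * gap_potential R) \<partial>step P)
        \<le> ennreal (9 * real \<mu> * real n * gap_potential P)"
      using drift_min_level[OF n P] drift_max_level[OF n P] by blast
    then show ?thesis unfolding integral unfolding s_eq fst_conv
      by (rule order_trans[rotated]) (simp add: indicator_def add_right_mono)
  qed
qed

lemma expected_time_le_harm:
  assumes "2 \<le> n"
  shows "expected_time n \<mu> (\<lambda>x. u (ones x)) pheno_dist 1 \<kappa> \<le> ennreal (18 * real \<mu> * real n * harm n)"
proof -
  let ?X = "ea_state n \<mu> (\<lambda>x. u (ones x)) pheno_dist 1 \<kappa>"
  let ?g = "\<lambda>s. ennreal (9 * real \<mu> * real n * gap_potential (fst s))"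
  have init: "set_pmf (?X 0) \<subseteq> Collect consistent_state"
    by (auto simp: consistent_state_def valid_pop_def dest: set_pmf_init_pop)
  have "expected_time n \<mu> (\<lambda>x. u (ones x)) pheno_dist 1 \<kappa> =
      (\<Sum>t. emeasure (measure_pmf (?X t)) {s. \<not> (fst (snd s) \<and> snd (snd s))})"
    unfolding expected_time_def measure_pmf.emeasure_eq_measure ..
  also have "\<dots> \<le> (\<integral>\<^sup>+ s. ?g s \<partial>?X 0)"
    using set_pmf_state_kernel state_kernel_drift[OF assms]
    by (intro suminf_prob_le_potential[where X = ?X and K = state_kernel, OF _ init]) (auto simp: state_kernel_def)
  also have "\<dots> \<le> (\<integral>\<^sup>+ s. ennreal (18 * real \<mu> * real n * harm n) \<partial>?X 0)"
  proof (rule nn_integral_mono_AE, rule AE_pmfI)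
    fix s assume "s \<in> set_pmf (?X 0)"
    then have "gap_potential (fst s) \<le> 2 * harm n"
      using init by (intro gap_potential_le) (auto simp: consistent_state_def)
    then have "9 * real \<mu> * real n * gap_potential (fst s) \<le> 9 * real \<mu> * real n * (2 * harm n)"
      by (intro mult_left_mono) auto
    then show "?g s \<le> ennreal (18 * real \<mu> * real n * harm n)"
      by (intro ennreal_leI) simp
  qed
  finally show ?thesis by simp
qed

end

lemma expected_time_le:
  fixes u :: "nat \<Rightarrow> real"
  assumes n: "3 \<le> n" and "\<forall>k \<le> n. 0 < u k" "1 \<le> \<kappa>" "(n + 1) * \<kappa> \<le> \<mu>"
  shows "expected_time n \<mu> (\<lambda>x. u (ones x)) pheno_dist 1 \<kappa> \<le> ennreal (36 * real \<mu> * real n * ln (real n))"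
proof -
  interpret unitation_clearing n \<mu> \<kappa> u using assms by unfold_locales auto
  have "1 \<le> ln (real n)"
    using exp_le n by (subst ln_ge_iff) auto
  then have "harm n \<le> 2 * ln (real n)" using harm_le_1_plus_ln[of n] n by simp
  then have "18 * real \<mu> * real n * harm n \<le> 36 * real \<mu> * real n * ln (real n)"
    using mult_left_mono[of "harm n" "2 * ln (real n)" "18 * real \<mu> * real n"] by simp
  moreover have "expected_time n \<mu> (\<lambda>x. u (ones x)) pheno_dist 1 \<kappa> \<le> ennreal (18 * real \<mu> * real n * harm n)"
    using n by (intro expected_time_le_harm) simp
  ultimately show ?thesis using ennreal_leI order_trans by blast
qed

theorem lemma2:
  shows "\<exists>c > 0. \<exists>n0. \<forall>n \<ge> n0. \<forall>(u :: nat \<Rightarrow> real) (\<kappa> :: nat) (\<mu> :: nat).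
           (\<forall>k \<le> n. 0 < u k) \<and> 1 \<le> \<kappa> \<and> (n + 1) * \<kappa> \<le> \<mu> \<longrightarrow>
           expected_time n \<mu> (\<lambda>x. u (ones x)) pheno_dist 1 \<kappa>
             \<le> ennreal (c * real \<mu> * real n * ln (real n))"
  using expected_time_le by (intro exI[of _ "36::real"] conjI exI[of _ "3::nat"] allI impI) auto

end
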